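(* Let $L$ be a combinatorial tiling locally isomorphic to $K$, and let $L_{\mathrm{aff}}^{(1)}$ be the 1-skeleton of $L_{\mathrm{aff}}$. Let $d'$ be the unit-edge metric on $L_{\mathrm{aff}}^{(1)}$ and $d$ the path metric on $L_{\mathrm{aff}}$ restricted to $L_{\mathrm{aff}}^{(1)}$. Then $d'$ and $d$ are equivalent on $L_{\mathrm{aff}}^{(1)}$; more precisely, $d\le d'\le 3d$.
   Context: A combinatorial tiling is a 2-dimensional CW-complex homeomorphic to the plane. The combinatorial pentagonal tiling $K$ is built as follows: $K_0$ is a (decorated) combinatorial pentagon, i.e. a space homeomorphic to the closed disk with five distinguished boundary points; the pentagonal subdivision rule $\omega$ replaces each pentagon $t$ by a supertile $\omega(t)$ consisting of six pentagons (a central pentagon surrounded by a ring of five, combinatorially half a dodecahedron), each edge of $t$ being split into two edges, with decorations of the subtiles prescribed by the rule (finitely many decorated prototiles); $K_n:=\omega^n(K_0)$, embeddings $\iota_n:K_n\to K_{n+1}$ send the central pentagon to the central pentagon, and $K:=\varinjlim K_n$. A combinatorial tiling $L$ is locally isomorphic to $K$ if every finite patch (finite subcomplex) of $L$ is isomorphic, via a cell-preserving decoration-preserving isomorphism, to a patch of $K$. For such $L$, $L_{\mathrm{aff}}$ is the space $L$ with the metric obtained by making each edge isometric to $[0,1]$ and each face isometric to a Euclidean regular pentagon of side length $1$; the distance $d$ between two points is the length of a shortest path between them. The unit-edge metric $d'$ on the 1-skeleton is the length of a shortest path within the 1-skeleton (edge-path), each edge having length $1$. *)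

theory Defs
  imports "HOL-Analysis.Analysis" "HOL-Library.FSet"
begin

text \<open>A combinatorial 2-complex all of whose faces are pentagons is encoded by a set of
faces F and a corner map cor: the corners of face f in cyclic order are
cor f 0, ..., cor f 4 (indices are taken mod 5).\<close>

definition nx :: "nat \<Rightarrow> nat" where "nx k = Suc k mod 5"

definition cx_verts :: "'f set \<Rightarrow> ('f \<Rightarrow> nat \<Rightarrow> 'v) \<Rightarrow> 'v set" where
  "cx_verts F cor = {cor f i | f i. f \<in> F \<and> i < 5}"

definition cx_edges :: "'f set \<Rightarrow> ('f \<Rightarrow> nat \<Rightarrow> 'v) \<Rightarrow> 'v set set" where
  "cx_edges F cor = {{cor f i, cor f (nx i)} | f i. f \<in> F \<and> i < 5}"

definition subcomplex ::
  "'f set \<Rightarrow> ('f \<Rightarrow> nat \<Rightarrow> 'v) \<Rightarrow> 'v set \<Rightarrow> 'v set set \<Rightarrow> 'f set \<Rightarrow> bool" where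
  "subcomplex F cor Vs Es Fs \<longleftrightarrow>
     finite Vs \<and> finite Es \<and> finite Fs \<and>
     Vs \<subseteq> cx_verts F cor \<and> Es \<subseteq> cx_edges F cor \<and> Fs \<subseteq> F \<and>
     (\<forall>f\<in>Fs. \<forall>i<5. cor f i \<in> Vs \<and> {cor f i, cor f (nx i)} \<in> Es) \<and>
     (\<forall>e\<in>Es. e \<subseteq> Vs)"

text \<open>Cell-preserving isomorphism of patches: bijections on vertices and faces, inducing a
bijection on edges, such that the boundary cycle of each face is carried to the boundary
cycle of the image face (up to rotation / reflection of the pentagon).\<close>

definition patch_iso ::
  "('f1 \<Rightarrow> nat \<Rightarrow> 'v1) \<Rightarrow> 'v1 set \<Rightarrow> 'v1 set set \<Rightarrow> 'f1 set \<Rightarrow>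
   ('f2 \<Rightarrow> nat \<Rightarrow> 'v2) \<Rightarrow> 'v2 set \<Rightarrow> 'v2 set set \<Rightarrow> 'f2 set \<Rightarrow> bool" where
  "patch_iso cor1 Vs1 Es1 Fs1 cor2 Vs2 Es2 Fs2 \<longleftrightarrow>
     (\<exists>\<phi> \<psi>. bij_betw \<phi> Vs1 Vs2 \<and> bij_betw \<psi> Fs1 Fs2 \<and>
        (\<lambda>e. \<phi> ` e) ` Es1 = Es2 \<and>
        (\<forall>f\<in>Fs1. \<exists>r<5. \<exists>s::bool. \<forall>i<5.
            \<phi> (cor1 f i) = cor2 (\<psi> f) (if s then (r + i) mod 5 else (r + (5 - i)) mod 5)))"

text \<open>Vertex names: the five corners of K_0, midpoints of edges (named by the unordered pair
of endpoints), and the five central vertices of the supertile of a face (named by the face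
address and an index).\<close>

datatype pv = Top nat | Mid "pv fset" | Cen "nat list" nat

text \<open>Faces of K_n are addresses: lists of digits in {0..5} of length n; the head digit is the
position in the last subdivision step (5 = central pentagon, j < 5 = j-th ring pentagon).
The subdivision rule omega: the central pentagon has corners Cen w 0..4; the spoke from
Cen w j goes to the midpoint of edge j (corners j, j+1) of face w; ring pentagon j has corners
Cen w j, Cen w (j+1), Mid(v(j+1),v(j+2)), v(j+1), Mid(v j, v(j+1)).\<close>

fun kcor :: "nat list \<Rightarrow> nat \<Rightarrow> pv" where
  "kcor [] i = Top (i mod 5)"
| "kcor (d # w) i =
     (if d = 5 then Cen w (i mod 5)
      else (let v = (\<lambda>k. kcor w (k mod 5)) in
            (if i mod 5 = 0 then Cen w (d mod 5)
             else if i mod 5 = 1 then Cen w ((d + 1) mod 5)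
             else if i mod 5 = 2 then Mid {|v (d + 1), v (d + 2)|}
             else if i mod 5 = 3 then v (d + 1)
             else Mid {|v d, v (d + 1)|})))"

definition kfaces :: "nat \<Rightarrow> nat list set" where
  "kfaces n = {w. length w = n \<and> (\<forall>d\<in>set w. d \<le> 5)}"

text \<open>K is the direct limit of the K_n = omega^n(K_0); its finite patches are exactly the
finite patches of the K_n.  L is locally isomorphic to K iff every finite patch of L is
isomorphic to a patch of K.\<close>

definition locally_iso_K :: "'f set \<Rightarrow> ('f \<Rightarrow> nat \<Rightarrow> 'v) \<Rightarrow> bool" where
  "locally_iso_K F cor \<longleftrightarrow>
     (\<forall>Vs Es Fs. subcomplex F cor Vs Es Fs \<longrightarrow>
        (\<exists>n Vs' Es' Fs'. subcomplex (kfaces n) kcor Vs' Es' Fs' \<and>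
            patch_iso cor Vs Es Fs kcor Vs' Es' Fs'))"

definition Rpent :: real where "Rpent = 1 / (2 * sin (pi / 5))"

text \<open>Corners of the standard regular pentagon of side length 1.\<close>
definition pc :: "nat \<Rightarrow> complex" where
  "pc k = complex_of_real Rpent * cis (2 * pi * real k / 5)"

definition Pent :: "complex set" where "Pent = convex hull (pc ` {..<5})"

definition pedge :: "nat \<Rightarrow> complex set" where
  "pedge k = closed_segment (pc k) (pc (Suc k))"

text \<open>Points of L_aff are represented by (face, point of the standard pentagon); the gluing
relation identifies corners with equal vertex names and edge points along edges with equal
endpoints (isometrically, respecting endpoints).\<close>

definition glue :: "'f set \<Rightarrow> ('f \<Rightarrow> nat \<Rightarrow> 'v) \<Rightarrow> 'f \<times> complex \<Rightarrow> 'f \<times> complex \<Rightarrow> bool" where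
  "glue F cor p q \<longleftrightarrow> (case p of (f, z) \<Rightarrow> case q of (g, w) \<Rightarrow>
     f \<in> F \<and> g \<in> F \<and> z \<in> Pent \<and> w \<in> Pent \<and>
     ((f = g \<and> z = w) \<or>
      (\<exists>k<5. \<exists>j<5. z = pc k \<and> w = pc j \<and> cor f k = cor g j) \<or>
      (\<exists>k<5. \<exists>j<5. \<exists>t::real. 0 \<le> t \<and> t \<le> 1 \<and> z = (1 - t) *\<^sub>R pc k + t *\<^sub>R pc (Suc k) \<and>
         ((cor f k = cor g j \<and> cor f (nx k) = cor g (nx j) \<and>
             w = (1 - t) *\<^sub>R pc j + t *\<^sub>R pc (Suc j)) \<or>
          (cor f k = cor g (nx j) \<and> cor f (nx k) = cor g j \<and>
             w = t *\<^sub>R pc j + (1 - t) *\<^sub>R pc (Suc j))))))"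

definition same_pt :: "'f set \<Rightarrow> ('f \<Rightarrow> nat \<Rightarrow> 'v) \<Rightarrow> 'f \<times> complex \<Rightarrow> 'f \<times> complex \<Rightarrow> bool" where
  "same_pt F cor p q \<longleftrightarrow> (p, q) \<in> {(a, b). glue F cor a b}\<^sup>*"

definition reps :: "'f set \<Rightarrow> ('f \<times> complex) set" where
  "reps F = Sigma F (\<lambda>_. Pent)"

definition cls :: "'f set \<Rightarrow> ('f \<Rightarrow> nat \<Rightarrow> 'v) \<Rightarrow> 'f \<times> complex \<Rightarrow> ('f \<times> complex) set" where
  "cls F cor p = {q \<in> reps F. same_pt F cor p q}"

text \<open>CW (weak/quotient) topology on the realisation: a set of points is open iff its
preimage in every closed face is open.\<close>

definition realisation_top :: "'f set \<Rightarrow> ('f \<Rightarrow> nat \<Rightarrow> 'v) \<Rightarrow> ('f \<times> complex) set topology" where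
  "realisation_top F cor = topology (\<lambda>U. U \<subseteq> cls F cor ` reps F \<and>
      (\<forall>f\<in>F. openin (top_of_set Pent) {z \<in> Pent. cls F cor (f, z) \<in> U}))"

lemma istopology_realisation:
  "istopology (\<lambda>U. U \<subseteq> cls F cor ` reps F \<and>
      (\<forall>f\<in>F. openin (top_of_set Pent) {z \<in> Pent. cls F cor (f, z) \<in> U}))"
  unfolding istopology_def
proof (rule conjI; intro allI impI)
  fix S T
  assume S: "S \<subseteq> cls F cor ` reps F \<and> (\<forall>f\<in>F. openin (top_of_set Pent) {z \<in> Pent. cls F cor (f, z) \<in> S})"
    and T: "T \<subseteq> cls F cor ` reps F \<and> (\<forall>f\<in>F. openin (top_of_set Pent) {z \<in> Pent. cls F cor (f, z) \<in> T})"
  show "S \<inter> T \<subseteq> cls F cor ` reps F \<and> (\<forall>f\<in>F. openin (top_of_set Pent) {z \<in> Pent. cls F cor (f, z) \<in> S \<inter> T})"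
  proof (intro conjI ballI)
    show "S \<inter> T \<subseteq> cls F cor ` reps F" using S by blast
  next
    fix f assume "f \<in> F"
    then show "openin (top_of_set Pent) {z \<in> Pent. cls F cor (f, z) \<in> S \<inter> T}"
    proof -
      have e: "{z \<in> Pent. cls F cor (f, z) \<in> S \<inter> T} =
          {z \<in> Pent. cls F cor (f, z) \<in> S} \<inter> {z \<in> Pent. cls F cor (f, z) \<in> T}" by blast
      show ?thesis unfolding e using S T \<open>f \<in> F\<close> by (intro openin_Int) auto
    qed
  qed
next
  fix KK
  assume H: "\<forall>K\<in>KK. K \<subseteq> cls F cor ` reps F \<and> (\<forall>f\<in>F. openin (top_of_set Pent) {z \<in> Pent. cls F cor (f, z) \<in> K})"
  show "\<Union>KK \<subseteq> cls F cor ` reps F \<and> (\<forall>f\<in>F. openin (top_of_set Pent) {z \<in> Pent. cls F cor (f, z) \<in> \<Union>KK})"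
  proof (intro conjI ballI)
    show "\<Union>KK \<subseteq> cls F cor ` reps F" using H by blast
  next
    fix f assume "f \<in> F"
    have e: "{z \<in> Pent. cls F cor (f, z) \<in> \<Union>KK} = \<Union>((\<lambda>K. {z \<in> Pent. cls F cor (f, z) \<in> K}) ` KK)" by blast
    show "openin (top_of_set Pent) {z \<in> Pent. cls F cor (f, z) \<in> \<Union>KK}"
      unfolding e using H \<open>f \<in> F\<close> by (intro openin_Union) auto
  qed
qed

definition combinatorial_tiling :: "'f set \<Rightarrow> ('f \<Rightarrow> nat \<Rightarrow> 'v) \<Rightarrow> bool" where
  "combinatorial_tiling F cor \<longleftrightarrow>
     realisation_top F cor homeomorphic_space (euclidean :: (real^2) topology)"

text \<open>Strings (Bridson-Haefliger): a nonempty list of steps (f, z, w), each a straight segment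
from z to w inside the closed face f, consecutive steps joined at the same point of L.
ok restricts which segments are allowed.\<close>

definition string_ok ::
  "'f set \<Rightarrow> ('f \<Rightarrow> nat \<Rightarrow> 'v) \<Rightarrow> (complex \<Rightarrow> complex \<Rightarrow> bool) \<Rightarrow>
   'f \<times> complex \<Rightarrow> 'f \<times> complex \<Rightarrow> ('f \<times> complex \<times> complex) list \<Rightarrow> bool" where
  "string_ok F cor ok p q ss \<longleftrightarrow>
     ss \<noteq> [] \<and>
     (\<forall>(f, z, w) \<in> set ss. f \<in> F \<and> z \<in> Pent \<and> w \<in> Pent \<and> ok z w) \<and>
     same_pt F cor p (fst (hd ss), fst (snd (hd ss))) \<and>
     same_pt F cor (fst (last ss), snd (snd (last ss))) q \<and>
     (\<forall>i. Suc i < length ss \<longrightarrow>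
        same_pt F cor (fst (ss ! i), snd (snd (ss ! i))) (fst (ss ! Suc i), fst (snd (ss ! Suc i))))"

definition string_len :: "('f \<times> complex \<times> complex) list \<Rightarrow> real" where
  "string_len ss = sum_list (map (\<lambda>(f, z, w). cmod (z - w)) ss)"

definition dist_aff :: "'f set \<Rightarrow> ('f \<Rightarrow> nat \<Rightarrow> 'v) \<Rightarrow> 'f \<times> complex \<Rightarrow> 'f \<times> complex \<Rightarrow> real" where
  "dist_aff F cor p q = Inf {string_len ss | ss. string_ok F cor (\<lambda>_ _. True) p q ss}"

definition dist_edge :: "'f set \<Rightarrow> ('f \<Rightarrow> nat \<Rightarrow> 'v) \<Rightarrow> 'f \<times> complex \<Rightarrow> 'f \<times> complex \<Rightarrow> real" where
  "dist_edge F cor p q =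
     Inf {string_len ss | ss. string_ok F cor (\<lambda>z w. \<exists>k<5. z \<in> pedge k \<and> w \<in> pedge k) p q ss}"

definition skel :: "complex set" where "skel = (\<Union>k<5. pedge k)"

end

theory Submission
  imports Defs
begin

text \<open>A string between two points of the 1-skeleton can be straightened into an edge path at
most three times as long.  Gluing identifies boundary points only, so a string leaves the
skeleton only inside a single face, and consecutive segments there merge (triangle inequality)
into one chord between two boundary points of the same regular pentagon.  Two boundary points on
the same, adjacent or next-but-one sides are joined along the boundary by a path of length at
most three times the chord: at a corner the interior angle is obtuse, so the detour through the
corner is at most \<open>sqrt 2\<close> times the chord; for sides two apart each of the three pieces is at
most a side, and projecting the chord onto the middle side shows that a side is at most the
chord.  Conversely every edge path is a string, and edge paths exist between any two skeleton
points because the tiling, being homeomorphic to the plane, is connected.\<close>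

section \<open>Geometry of the regular pentagon\<close>

lemma pc_mod: "pc (k mod 5) = pc k"
proof -
  have "real k = real (k mod 5 + 5 * (k div 5))" by simp
  then have "real k = real (k mod 5) + 5 * real (k div 5)"
    by (simp only: of_nat_add of_nat_mult of_nat_numeral)
  then have "2 * pi * real k / 5 = 2 * pi * real (k mod 5) / 5 + 2 * pi * real (k div 5)"
    by (simp add: field_simps)
  then have "cis (2 * pi * real k / 5) =
      cis (2 * pi * real (k mod 5) / 5) * cis (2 * pi * real (k div 5))"
    by (simp only: cis_mult)
  then have "cis (2 * pi * real k / 5) = cis (2 * pi * real (k mod 5) / 5)"
    by simp
  then show ?thesis by (simp add: pc_def)
qed

lemma pedge_mod: "pedge (k mod 5) = pedge k"
  unfolding pedge_def by (metis mod_Suc_eq pc_mod)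

lemma pc_Suc_Suc_minus:
  "pc (Suc (Suc k)) - pc (Suc k) = (pc (Suc k) - pc k) * cis (2 * pi / 5)"
proof -
  have "pc (Suc k) = pc k * cis (2 * pi / 5)" for k
    unfolding pc_def by (simp add: cis_mult algebra_simps add_divide_distrib)
  then show ?thesis by (simp add: algebra_simps)
qed

lemma inner_pedge_directions_nonneg:
  "inner (pc (Suc k) - pc k) (pc (Suc (Suc k)) - pc (Suc k)) \<ge> 0"
proof -
  have "cos (2 * pi / 5) > 0" by (rule cos_gt_zero_pi) (auto simp: field_simps)
  moreover have "inner x (x * cis (2 * pi / 5)) = (Re x ^ 2 + Im x ^ 2) * cos (2 * pi / 5)" for x
    by (simp add: inner_complex_def power2_eq_square algebra_simps)
  ultimately show ?thesis unfolding pc_Suc_Suc_minus by simp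
qed

lemma norm_pedge_directions_eq:
  "norm (pc (Suc (Suc k)) - pc (Suc k)) = norm (pc (Suc k) - pc k)"
  unfolding pc_Suc_Suc_minus by (simp add: norm_mult)

lemma norm_add_norm_le_if_inner_nonpos:
  fixes x y :: "'a :: real_inner"
  assumes "inner x y \<le> 0"
  shows "norm x + norm y \<le> sqrt 2 * norm (x - y)"
proof -
  have "(norm x + norm y)\<^sup>2 \<le> 2 * ((norm x)\<^sup>2 + (norm y)\<^sup>2)"
    by (simp add: power2_sum) (smt (verit) sum_squares_ge_zero power2_diff zero_le_power2)
  also have "\<dots> \<le> 2 * (norm (x - y))\<^sup>2"
    using assms dot_norm_neg[of x y] by simp
  finally have "sqrt ((norm x + norm y)\<^sup>2) \<le> sqrt (2 * (norm (x - y))\<^sup>2)"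
    by (rule real_sqrt_le_mono)
  then show ?thesis by (simp add: real_sqrt_mult)
qed

lemma norm_le_norm_add3_if_inner_nonneg:
  fixes u e v :: "'a :: real_inner"
  assumes "inner u e \<ge> 0" and "inner v e \<ge> 0"
  shows "norm e \<le> norm (u + e + v)"
proof (cases "e = 0")
  case False
  have "norm e * norm e = inner e e" by (simp add: norm_eq_sqrt_inner)
  also have "\<dots> \<le> inner (u + e + v) e" using assms by (simp add: inner_add_left)
  also have "\<dots> \<le> norm (u + e + v) * norm e" by (rule norm_cauchy_schwarz)
  finally show ?thesis using False by simp
qed simp

lemma pedge_param:
  assumes "z \<in> pedge k"
  obtains s where "0 \<le> s" "s \<le> 1" "z = pc k + s *\<^sub>R (pc (Suc k) - pc k)"
  using assms unfolding pedge_def closed_segment_def by (auto simp: algebra_simps)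

lemma detour_adjacent_pedges:
  assumes "z \<in> pedge k" and "w \<in> pedge (Suc k)"
  shows "cmod (z - pc (Suc k)) + cmod (pc (Suc k) - w) \<le> 3 * cmod (z - w)"
proof -
  obtain s where s: "0 \<le> s" "s \<le> 1" "z = pc k + s *\<^sub>R (pc (Suc k) - pc k)"
    using assms(1) by (rule pedge_param)
  obtain t where t: "0 \<le> t" "t \<le> 1" "w = pc (Suc k) + t *\<^sub>R (pc (Suc (Suc k)) - pc (Suc k))"
    using assms(2) by (rule pedge_param)
  have "z - pc (Suc k) = - ((1 - s) *\<^sub>R (pc (Suc k) - pc k))"
    using s(3) by (simp add: algebra_simps)
  then have "inner (z - pc (Suc k)) (w - pc (Suc k)) =
      - ((1 - s) * t * inner (pc (Suc k) - pc k) (pc (Suc (Suc k)) - pc (Suc k)))"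
    by (simp add: t(3))
  also have "\<dots> \<le> 0" using s t inner_pedge_directions_nonneg by simp
  finally have "cmod (z - pc (Suc k)) + cmod (w - pc (Suc k)) \<le> sqrt 2 * cmod (z - w)"
    using norm_add_norm_le_if_inner_nonpos by fastforce
  moreover have "sqrt 2 * cmod (z - w) \<le> 3 * cmod (z - w)"
    using sqrt2_less_2 by (intro mult_right_mono) simp_all
  ultimately show ?thesis by (simp add: norm_minus_commute)
qed

lemma detour_pedges_two_apart:
  assumes "z \<in> pedge k" and "w \<in> pedge (Suc (Suc k))"
  shows "cmod (z - pc (Suc k)) + cmod (pc (Suc k) - pc (Suc (Suc k))) + cmod (pc (Suc (Suc k)) - w)
     \<le> 3 * cmod (z - w)"
proof -
  define e where "e = pc (Suc (Suc k)) - pc (Suc k)"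
  obtain s where s: "0 \<le> s" "s \<le> 1" "z = pc k + s *\<^sub>R (pc (Suc k) - pc k)"
    using assms(1) by (rule pedge_param)
  obtain t where t: "0 \<le> t" "t \<le> 1"
      "w = pc (Suc (Suc k)) + t *\<^sub>R (pc (Suc (Suc (Suc k))) - pc (Suc (Suc k)))"
    using assms(2) by (rule pedge_param)
  have side0: "cmod (pc (Suc k) - pc k) = cmod e"
    and side2: "cmod (pc (Suc (Suc (Suc k))) - pc (Suc (Suc k))) = cmod e"
    unfolding e_def using norm_pedge_directions_eq[of k] norm_pedge_directions_eq[of "Suc k"]
    by simp_all
  have "w - z =
      t *\<^sub>R (pc (Suc (Suc (Suc k))) - pc (Suc (Suc k))) + e + (1 - s) *\<^sub>R (pc (Suc k) - pc k)"
    unfolding s(3) t(3) e_def by (simp add: algebra_simps)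
  moreover have "inner ((1 - s) *\<^sub>R (pc (Suc k) - pc k)) e \<ge> 0"
    using s inner_pedge_directions_nonneg[of k] unfolding e_def by simp
  moreover have "inner (t *\<^sub>R (pc (Suc (Suc (Suc k))) - pc (Suc (Suc k)))) e \<ge> 0"
    using t inner_pedge_directions_nonneg[of "Suc k"] unfolding e_def by (simp add: inner_commute)
  ultimately have "cmod e \<le> cmod (z - w)"
    using norm_le_norm_add3_if_inner_nonneg by (metis add.commute norm_minus_commute)
  moreover have "cmod (z - pc (Suc k)) \<le> cmod e"
  proof -
    have "z - pc (Suc k) = (1 - s) *\<^sub>R (pc k - pc (Suc k))"
      using s(3) by (simp add: algebra_simps)
    then show ?thesis using s side0 by (simp add: norm_minus_commute mult_left_le_one_le)
  qed
  moreover have "cmod (pc (Suc (Suc k)) - w) \<le> cmod e"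
    using t side2 by (simp add: t(3) mult_left_le_one_le)
  moreover have "cmod (pc (Suc k) - pc (Suc (Suc k))) = cmod e"
    unfolding e_def by (simp add: norm_minus_commute)
  ultimately show ?thesis by linarith
qed

section \<open>Strings\<close>

lemma same_pt_refl [simp]: "same_pt F cor p p"
  unfolding same_pt_def by simp

lemma same_pt_trans: "same_pt F cor p q \<Longrightarrow> same_pt F cor q r \<Longrightarrow> same_pt F cor p r"
  unfolding same_pt_def by (rule rtrancl_trans)

lemma string_len_Nil [simp]: "string_len [] = 0"
  by (simp add: string_len_def)

lemma string_len_Cons [simp]: "string_len ((f, z, w) # ss) = cmod (z - w) + string_len ss"
  by (simp add: string_len_def)

lemma string_len_append [simp]: "string_len (ss @ ss') = string_len ss + string_len ss'"
  by (simp add: string_len_def)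

lemma string_len_nonneg: "string_len ss \<ge> 0"
  unfolding string_len_def by (induction ss) auto

lemma string_ok_Cons:
  "string_ok F cor ok p q ((f, z, w) # ss) \<longleftrightarrow>
     f \<in> F \<and> z \<in> Pent \<and> w \<in> Pent \<and> ok z w \<and> same_pt F cor p (f, z) \<and>
     (if ss = [] then same_pt F cor (f, w) q else string_ok F cor ok (f, w) q ss)"
proof (cases ss)
  case (Cons a ss')
  have "(\<forall>i. Suc i < length ((f, z, w) # ss) \<longrightarrow> P i) \<longleftrightarrow>
      P 0 \<and> (\<forall>i. Suc i < length ss \<longrightarrow> P (Suc i))" for P
    using Cons by (auto simp: less_Suc_eq_0_disj)
  then show ?thesis using Cons unfolding string_ok_def by auto
qed (auto simp: string_ok_def)

lemma string_ok_move_start: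
  "same_pt F cor p p' \<Longrightarrow> string_ok F cor ok p' q ss \<Longrightarrow> string_ok F cor ok p q ss"
  unfolding string_ok_def using same_pt_trans by blast

lemma string_ok_move_end:
  "string_ok F cor ok p q' ss \<Longrightarrow> same_pt F cor q' q \<Longrightarrow> string_ok F cor ok p q ss"
  unfolding string_ok_def using same_pt_trans by blast

lemma string_ok_append:
  "string_ok F cor ok p q ss \<Longrightarrow> string_ok F cor ok q r ss' \<Longrightarrow>
   string_ok F cor ok p r (ss @ ss')"
proof (induction ss arbitrary: p)
  case (Cons a ss)
  obtain f z w where a: "a = (f, z, w)" by (cases a)
  have "ss' \<noteq> []" using Cons.prems(2) by (simp add: string_ok_def)
  then show ?case using Cons unfolding a
    by (cases "ss = []") (auto simp: string_ok_Cons intro: string_ok_move_start)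
qed (simp add: string_ok_def)

lemma string_ok_mono:
  "(\<And>z w. ok z w \<Longrightarrow> ok' z w) \<Longrightarrow> string_ok F cor ok p q ss \<Longrightarrow>
   string_ok F cor ok' p q ss"
  unfolding string_ok_def by fast


section \<open>Edge paths inside one face\<close>

abbreviation on_common_pedge :: "complex \<Rightarrow> complex \<Rightarrow> bool" where
  "on_common_pedge \<equiv> (\<lambda>z w. \<exists>k<5. z \<in> pedge k \<and> w \<in> pedge k)"

lemma pc_in_Pent: "pc k \<in> Pent"
  unfolding Pent_def by (rule hull_inc) (metis pc_mod lessThan_iff mod_less_divisor
      zero_less_numeral image_eqI)

lemma pedge_subset_Pent: "pedge k \<subseteq> Pent"
  unfolding pedge_def Pent_def
  by (rule closed_segment_subset) (auto simp: convex_convex_hull pc_in_Pent[unfolded Pent_def])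

lemma pedge_subset_skel: "pedge k \<subseteq> skel"
  unfolding skel_def by (metis UN_upper lessThan_iff mod_less_divisor pedge_mod zero_less_numeral)

lemma pc_in_pedge: "pc k \<in> pedge k" "pc (Suc k) \<in> pedge k"
  unfolding pedge_def by simp_all

lemma pc_in_skel: "pc k \<in> skel"
  using pc_in_pedge pedge_subset_skel by blast

lemma on_common_pedgeI: "z \<in> pedge k \<Longrightarrow> w \<in> pedge k \<Longrightarrow> on_common_pedge z w"
  by (metis mod_less_divisor pedge_mod zero_less_numeral)

lemma string_ok_within_pedge:
  "f \<in> F \<Longrightarrow> z \<in> pedge k \<Longrightarrow> w \<in> pedge k \<Longrightarrow>
   string_ok F cor on_common_pedge (f, z) (f, w) [(f, z, w)]"
  using pedge_subset_Pent by (auto simp: string_ok_Cons intro: on_common_pedgeI)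

lemma string_ok_two_pedges:
  assumes "f \<in> F" "z \<in> pedge k" "c \<in> pedge k" "c \<in> pedge j" "w \<in> pedge j"
  shows "string_ok F cor on_common_pedge (f, z) (f, w) [(f, z, c), (f, c, w)]"
  using string_ok_append[OF string_ok_within_pedge[of f F z k c]
      string_ok_within_pedge[of f F c j w]] assms by simp

lemma string_ok_three_pedges:
  assumes "f \<in> F" "z \<in> pedge k" "c \<in> pedge k" "c \<in> pedge i" "d \<in> pedge i"
    "d \<in> pedge j" "w \<in> pedge j"
  shows "string_ok F cor on_common_pedge (f, z) (f, w) [(f, z, c), (f, c, d), (f, d, w)]"
  using string_ok_append[OF string_ok_within_pedge[of f F z k c]
      string_ok_two_pedges[of f F c i d j w]] assms by simp

lemma edge_string_pedges_near:
  assumes f: "f \<in> F" and x: "x \<in> pedge k" and y: "y \<in> pedge (k + d)" and "d \<le> 2"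
  shows "\<exists>ss. string_ok F cor on_common_pedge (f, x) (f, y) ss \<and> string_len ss \<le> 3 * cmod (x - y)"
    and "\<exists>ss. string_ok F cor on_common_pedge (f, y) (f, x) ss \<and> string_len ss \<le> 3 * cmod (x - y)"
proof -
  consider "d = 0" | "d = 1" | "d = 2" using \<open>d \<le> 2\<close> by linarith
  then have "(\<exists>ss. string_ok F cor on_common_pedge (f, x) (f, y) ss \<and> string_len ss \<le> 3 * cmod (x - y)) \<and>
    (\<exists>ss. string_ok F cor on_common_pedge (f, y) (f, x) ss \<and> string_len ss \<le> 3 * cmod (x - y))"
  proof cases
    case 1
    have "string_len [(f, x, y)] \<le> 3 * cmod (x - y)" "string_len [(f, y, x)] \<le> 3 * cmod (x - y)"
      by (simp_all add: norm_minus_commute)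
    moreover have "string_ok F cor on_common_pedge (f, x) (f, y) [(f, x, y)]"
      "string_ok F cor on_common_pedge (f, y) (f, x) [(f, y, x)]"
      using f x y 1 by (simp_all add: string_ok_within_pedge)
    ultimately show ?thesis by blast
  next
    case 2
    let ?c = "pc (Suc k)"
    have "cmod (x - ?c) + cmod (?c - y) \<le> 3 * cmod (x - y)"
      using detour_adjacent_pedges[OF x] y 2 by simp
    then have "string_len [(f, x, ?c), (f, ?c, y)] \<le> 3 * cmod (x - y)"
      "string_len [(f, y, ?c), (f, ?c, x)] \<le> 3 * cmod (x - y)"
      by (simp_all add: norm_minus_commute[of y ?c] norm_minus_commute[of ?c x])
    moreover have "string_ok F cor on_common_pedge (f, x) (f, y) [(f, x, ?c), (f, ?c, y)]"
      "string_ok F cor on_common_pedge (f, y) (f, x) [(f, y, ?c), (f, ?c, x)]"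
      using f x y 2 pc_in_pedge by (auto intro: string_ok_two_pedges)
    ultimately show ?thesis by blast
  next
    case 3
    let ?c = "pc (Suc k)" and ?c' = "pc (Suc (Suc k))"
    have "cmod (x - ?c) + cmod (?c - ?c') + cmod (?c' - y) \<le> 3 * cmod (x - y)"
      using detour_pedges_two_apart[OF x] y 3 by (simp add: numeral_2_eq_2)
    then have "string_len [(f, x, ?c), (f, ?c, ?c'), (f, ?c', y)] \<le> 3 * cmod (x - y)"
      "string_len [(f, y, ?c'), (f, ?c', ?c), (f, ?c, x)] \<le> 3 * cmod (x - y)"
      by (simp_all add: norm_minus_commute[of y ?c'] norm_minus_commute[of ?c' ?c]
          norm_minus_commute[of ?c x])
    moreover have "string_ok F cor on_common_pedge (f, x) (f, y) [(f, x, ?c), (f, ?c, ?c'), (f, ?c', y)]"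
      "string_ok F cor on_common_pedge (f, y) (f, x) [(f, y, ?c'), (f, ?c', ?c), (f, ?c, x)]"
      using f x y 3 pc_in_pedge[of k] pc_in_pedge[of "Suc k"] pc_in_pedge[of "Suc (Suc k)"]
      by (auto intro: string_ok_three_pedges)
    ultimately show ?thesis by blast
  qed
  then show "\<exists>ss. string_ok F cor on_common_pedge (f, x) (f, y) ss \<and> string_len ss \<le> 3 * cmod (x - y)"
    and "\<exists>ss. string_ok F cor on_common_pedge (f, y) (f, x) ss \<and> string_len ss \<le> 3 * cmod (x - y)"
    by blast+
qed

lemma edge_string_in_face:
  assumes f: "f \<in> F" and z: "z \<in> skel" and w: "w \<in> skel"
  shows "\<exists>ss. string_ok F cor on_common_pedge (f, z) (f, w) ss \<and> string_len ss \<le> 3 * cmod (z - w)"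
proof -
  obtain k j where k: "k < 5" "z \<in> pedge k" and j: "j < 5" "w \<in> pedge j"
    using z w unfolding skel_def by auto
  have "k \<in> {0, 1, 2, 3, 4}" "j \<in> {0, 1, 2, 3, 4}" using k(1) j(1) by auto
  then have "\<exists>d\<in>{0, 1, 2}. (k + d) mod 5 = j \<or> (j + d) mod 5 = k" by auto
  then obtain d where "d \<in> {0, 1, 2}" and near: "(k + d) mod 5 = j \<or> (j + d) mod 5 = k"
    by blast
  then have "d \<le> 2" by auto
  from near show ?thesis
  proof
    assume "(k + d) mod 5 = j"
    then have "w \<in> pedge (k + d)" using j(2) pedge_mod[of "k + d"] by simp
    then show ?thesis using edge_string_pedges_near(1)[OF f k(2) _ \<open>d \<le> 2\<close>] by blast
  next
    assume "(j + d) mod 5 = k"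
    then have "z \<in> pedge (j + d)" using k(2) pedge_mod[of "j + d"] by simp
    from edge_string_pedges_near(2)[OF f j(2) this \<open>d \<le> 2\<close>] show ?thesis
      by (simp add: norm_minus_commute[of w z])
  qed
qed

section \<open>Gluing and straightening of strings\<close>

definition faces_share_vertex :: "'f set \<Rightarrow> ('f \<Rightarrow> nat \<Rightarrow> 'v) \<Rightarrow> ('f \<times> 'f) set" where
  "faces_share_vertex F cor = {(a, b). a \<in> F \<and> b \<in> F \<and> (\<exists>k<5. \<exists>j<5. cor a k = cor b j)}"

lemma pedge_point_in_skel:
  assumes "0 \<le> t" "t \<le> 1"
  shows "(1 - t) *\<^sub>R pc k + t *\<^sub>R pc (Suc k) \<in> skel" and "t *\<^sub>R pc k + (1 - t) *\<^sub>R pc (Suc k) \<in> skel"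
proof -
  have mem: "(1 - s) *\<^sub>R pc k + s *\<^sub>R pc (Suc k) \<in> pedge k" if "0 \<le> s" "s \<le> 1" for s
    using that unfolding pedge_def closed_segment_def by blast
  show "(1 - t) *\<^sub>R pc k + t *\<^sub>R pc (Suc k) \<in> skel"
    using mem[of t] assms pedge_subset_skel by blast
  show "t *\<^sub>R pc k + (1 - t) *\<^sub>R pc (Suc k) \<in> skel"
    using mem[of "1 - t"] assms pedge_subset_skel by auto
qed

lemma glue_off_skel: "glue F cor a b \<Longrightarrow> snd a \<notin> skel \<Longrightarrow> b = a"
  by (cases a; cases b) (auto simp: glue_def pc_in_skel pedge_point_in_skel)

lemma glue_skel: "glue F cor a b \<Longrightarrow> snd a \<in> skel \<Longrightarrow> snd b \<in> skel"
  by (cases a; cases b) (auto simp: glue_def pc_in_skel pedge_point_in_skel)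

lemma glue_faces_share_vertex:
  "glue F cor a b \<Longrightarrow> fst a = fst b \<or> (fst a, fst b) \<in> faces_share_vertex F cor"
  by (cases a; cases b) (auto simp: glue_def faces_share_vertex_def nx_def)

lemma glue_corners:
  "f \<in> F \<Longrightarrow> g \<in> F \<Longrightarrow> k < 5 \<Longrightarrow> j < 5 \<Longrightarrow> cor f k = cor g j \<Longrightarrow>
   glue F cor (f, pc k) (g, pc j)"
  using pc_in_Pent unfolding glue_def by auto


lemma same_pt_off_skel: "same_pt F cor a b \<Longrightarrow> snd a \<notin> skel \<Longrightarrow> b = a"
  unfolding same_pt_def by (induction rule: rtrancl_induct) (auto dest: glue_off_skel)

lemma same_pt_skel: "same_pt F cor a b \<Longrightarrow> snd a \<in> skel \<Longrightarrow> snd b \<in> skel"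
  unfolding same_pt_def by (induction rule: rtrancl_induct) (auto dest: glue_skel)

lemma same_pt_faces_connected:
  "same_pt F cor a b \<Longrightarrow> (fst a, fst b) \<in> (faces_share_vertex F cor)\<^sup>*"
  unfolding same_pt_def
  by (induction rule: rtrancl_induct) (auto dest: glue_faces_share_vertex intro: rtrancl_into_rtrancl)

lemma string_ok_merge_off_skel:
  assumes ok: "string_ok F cor (\<lambda>_ _. True) p q ((f, z, w) # ss)" and "w \<notin> skel" "snd q \<in> skel"
  obtains w' ss' where "ss = (f, w, w') # ss'" "string_ok F cor (\<lambda>_ _. True) p q ((f, z, w') # ss')"
proof -
  have "ss \<noteq> []"
    using ok assms(2,3) same_pt_off_skel[of F cor "(f, w)" q] by (auto simp: string_ok_Cons)
  then obtain g z' w' ss' where ss: "ss = (g, z', w') # ss'"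
    by (metis list.exhaust prod_cases3)
  have "same_pt F cor (f, w) (g, z')"
    using ok unfolding ss by (simp add: string_ok_Cons)
  then have "(g, z') = (f, w)" using same_pt_off_skel assms(2) by fastforce
  then show ?thesis
    using ok that[of w' ss'] unfolding ss by (auto simp: string_ok_Cons split: if_splits)
qed

lemma edge_string_le_three_times:
  "string_ok F cor (\<lambda>_ _. True) p q ss \<Longrightarrow> snd p \<in> skel \<Longrightarrow> snd q \<in> skel \<Longrightarrow>
   \<exists>ss'. string_ok F cor on_common_pedge p q ss' \<and> string_len ss' \<le> 3 * string_len ss"
proof (induction "length ss" arbitrary: p ss rule: less_induct)
  case less
  obtain f z w rest where ss: "ss = (f, z, w) # rest"
    using less.prems(1) unfolding string_ok_def by (metis list.exhaust prod_cases3)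
  have ok: "f \<in> F" "same_pt F cor p (f, z)"
    "rest = [] \<Longrightarrow> same_pt F cor (f, w) q"
    "rest \<noteq> [] \<Longrightarrow> string_ok F cor (\<lambda>_ _. True) (f, w) q rest"
    using less.prems(1) unfolding ss by (auto simp: string_ok_Cons)
  have z: "z \<in> skel" using same_pt_skel[OF ok(2)] less.prems(2) by simp
  show ?case
  proof (cases "w \<in> skel")
    case True
    obtain s1 where s1: "string_ok F cor on_common_pedge p (f, w) s1" "string_len s1 \<le> 3 * cmod (z - w)"
      using edge_string_in_face[OF ok(1) z True] string_ok_move_start[OF ok(2)] by blast
    show ?thesis
    proof (cases "rest = []")
      case True
      then show ?thesis using string_ok_move_end[OF s1(1) ok(3)] s1(2) ss by auto
    next
      case False
      obtain s2 where "string_ok F cor on_common_pedge (f, w) q s2" "string_len s2 \<le> 3 * string_len rest"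
        using less.hyps[of rest "(f, w)"] ok(4)[OF False] \<open>w \<in> skel\<close> less.prems(3) ss by auto
      then show ?thesis
        using string_ok_append[OF s1(1)] s1(2) ss by (intro exI[of _ "s1 @ s2"]) auto
    qed
  next
    case False
    obtain w' rest' where rest: "rest = (f, w, w') # rest'"
      and merged: "string_ok F cor (\<lambda>_ _. True) p q ((f, z, w') # rest')"
      using string_ok_merge_off_skel[OF less.prems(1)[unfolded ss] False less.prems(3)] by blast
    have "string_len ((f, z, w') # rest') \<le> string_len ss"
      using norm_triangle_ineq4[of "z - w" "w' - w"] unfolding ss rest by (simp add: norm_minus_commute[of w' w])
    moreover have "length ((f, z, w') # rest') < length ss" using ss rest by simp
    ultimately show ?thesis
      using less.hyps[OF _ merged less.prems(2,3)] by (meson dual_order.trans mult_left_mono zero_le_numeral)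
  qed
qed

section \<open>Connectedness\<close>

lemma openin_realisation_top:
  "openin (realisation_top F cor) U \<longleftrightarrow>
     U \<subseteq> cls F cor ` reps F \<and> (\<forall>f\<in>F. openin (top_of_set Pent) {z \<in> Pent. cls F cor (f, z) \<in> U})"
  unfolding realisation_top_def by (rule fun_cong[OF topology_inverse'[OF istopology_realisation]])

lemma topspace_realisation_top: "topspace (realisation_top F cor) \<subseteq> cls F cor ` reps F"
proof
  fix x assume "x \<in> topspace (realisation_top F cor)"
  then obtain S where "openin (realisation_top F cor) S" "x \<in> S" unfolding topspace_def by blast
  then show "x \<in> cls F cor ` reps F" unfolding openin_realisation_top by blast
qed

lemma same_pt_if_cls_eq:
  assumes "h \<in> F" "z \<in> Pent" and eq: "cls F cor (h, z) = cls F cor (g, z')"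
  shows "same_pt F cor (g, z') (h, z)"
proof -
  have "(h, z) \<in> cls F cor (h, z)" unfolding cls_def reps_def using assms(1,2) by simp
  then have "(h, z) \<in> cls F cor (g, z')" by (simp only: eq)
  then show ?thesis by (simp add: cls_def)
qed

lemma cls_in_faces_iff:
  assumes closed: "faces_share_vertex F cor `` C \<subseteq> C" and "h \<in> F" "z \<in> Pent"
  shows "cls F cor (h, z) \<in> {cls F cor (g, z') | g z'. g \<in> C \<and> z' \<in> Pent} \<longleftrightarrow> h \<in> C"
proof
  assume "cls F cor (h, z) \<in> {cls F cor (g, z') | g z'. g \<in> C \<and> z' \<in> Pent}"
  then obtain g z' where g: "g \<in> C" and eq: "cls F cor (h, z) = cls F cor (g, z')" by blast
  have "(g, h) \<in> (faces_share_vertex F cor)\<^sup>*"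
    using same_pt_faces_connected[OF same_pt_if_cls_eq[OF assms(2,3) eq]] by simp
  then show "h \<in> C" using g closed by (induction rule: rtrancl_induct) auto
next
  assume "h \<in> C"
  then show "cls F cor (h, z) \<in> {cls F cor (g, z') | g z'. g \<in> C \<and> z' \<in> Pent}"
    using assms(3) by blast
qed

lemma openin_cls_faces:
  assumes closed: "faces_share_vertex F cor `` C \<subseteq> C" and "C \<subseteq> F"
  shows "openin (realisation_top F cor) {cls F cor (g, z') | g z'. g \<in> C \<and> z' \<in> Pent}"
  unfolding openin_realisation_top
proof (intro conjI ballI)
  show "{cls F cor (g, z') | g z'. g \<in> C \<and> z' \<in> Pent} \<subseteq> cls F cor ` reps F"
    using assms(2) unfolding reps_def by blast
  fix h assume h: "h \<in> F"
  have "{z \<in> Pent. cls F cor (h, z) \<in> {cls F cor (g, z') | g z'. g \<in> C \<and> z' \<in> Pent}} =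
      (if h \<in> C then Pent else {})"
    using cls_in_faces_iff[of F cor C, OF closed h] by auto
  then show "openin (top_of_set Pent) {z \<in> Pent. cls F cor (h, z) \<in> {cls F cor (g, z') | g z'. g \<in> C \<and> z' \<in> Pent}}"
    by simp
qed

lemma faces_share_vertex_sym:
  "(a, b) \<in> faces_share_vertex F cor \<Longrightarrow> (b, a) \<in> faces_share_vertex F cor"
  unfolding faces_share_vertex_def by (simp, metis)

lemma closed_faces_eq_all:
  assumes conn: "connected_space (realisation_top F cor)"
    and closedC: "faces_share_vertex F cor `` C \<subseteq> C" and "C \<subseteq> F" "f \<in> C"
  shows "C = F"
proof -
  let ?R = "faces_share_vertex F cor"
  define U where "U D = {cls F cor (h, z) | h z. h \<in> D \<and> z \<in> Pent}" for D
  have closedD: "?R `` (F - C) \<subseteq> F - C"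
  proof
    fix b assume "b \<in> ?R `` (F - C)"
    then obtain a where ab: "(a, b) \<in> ?R" "a \<in> F - C" by blast
    then have "b \<in> F" unfolding faces_share_vertex_def by blast
    moreover have "b \<notin> C" using closedC faces_share_vertex_sym[OF ab(1)] ab(2) by blast
    ultimately show "b \<in> F - C" by simp
  qed
  have "openin (realisation_top F cor) (U C)" "openin (realisation_top F cor) (U (F - C))"
    unfolding U_def using openin_cls_faces closedC closedD \<open>C \<subseteq> F\<close> by blast+
  moreover have "topspace (realisation_top F cor) \<subseteq> U C \<union> U (F - C)"
  proof
    fix x assume "x \<in> topspace (realisation_top F cor)"
    then obtain h z where "h \<in> F" "z \<in> Pent" "x = cls F cor (h, z)"
      using topspace_realisation_top unfolding reps_def by blast
    then show "x \<in> U C \<union> U (F - C)" unfolding U_def by blast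
  qed
  moreover have "U C \<inter> U (F - C) = {}"
  proof (intro equals0I)
    fix x assume "x \<in> U C \<inter> U (F - C)"
    then obtain h z where h: "h \<in> C" and z: "z \<in> Pent" and "cls F cor (h, z) \<in> U (F - C)"
      unfolding U_def by blast
    then have "h \<in> F - C"
      using cls_in_faces_iff[of F cor "F - C" h z, OF closedD] \<open>C \<subseteq> F\<close> unfolding U_def by blast
    with h show False by simp
  qed
  moreover have "cls F cor (f, pc 0) \<in> U C"
    unfolding U_def using \<open>f \<in> C\<close> pc_in_Pent by blast
  ultimately have "U (F - C) = {}"
    using connected_spaceD[OF conn] by blast
  then show "C = F"
    unfolding U_def using \<open>C \<subseteq> F\<close> pc_in_Pent by blast
qed

lemma faces_connected:
  assumes "combinatorial_tiling F cor" and "f \<in> F" and "g \<in> F"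
  shows "(f, g) \<in> (faces_share_vertex F cor)\<^sup>*"
proof -
  define C where "C = {h \<in> F. (f, h) \<in> (faces_share_vertex F cor)\<^sup>*}"
  have "connected_space (euclidean :: (real^2) topology)"
    by (metis connectedin_iff_connected connected_UNIV connectedin_topspace topspace_euclidean)
  then have "connected_space (realisation_top F cor)"
    using assms(1) homeomorphic_connected_space unfolding combinatorial_tiling_def by blast
  moreover have "faces_share_vertex F cor `` C \<subseteq> C"
    unfolding C_def faces_share_vertex_def by (auto intro: rtrancl_into_rtrancl)
  ultimately have "C = F"
    by (rule closed_faces_eq_all) (use assms(2) in \<open>auto simp: C_def\<close>)
  then show ?thesis using assms(3) unfolding C_def by blast
qed

lemma edge_string_exists:
  assumes "combinatorial_tiling F cor" "f \<in> F" "g \<in> F" "z \<in> skel" "w \<in> skel"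
  shows "\<exists>ss. string_ok F cor on_common_pedge (f, z) (g, w) ss"
  using faces_connected[OF assms(1-3)] assms(5)
proof (induction arbitrary: w rule: rtrancl_induct)
  case base
  then show ?case using edge_string_in_face[OF assms(2,4)] by blast
next
  case (step h g')
  obtain k j where kj: "h \<in> F" "g' \<in> F" "k < 5" "j < 5" "cor h k = cor g' j"
    using step.hyps(2) unfolding faces_share_vertex_def by blast
  obtain s1 where s1: "string_ok F cor on_common_pedge (f, z) (h, pc k) s1"
    using step.IH[OF pc_in_skel] by blast
  obtain s2 where s2: "string_ok F cor on_common_pedge (g', pc j) (g', w) s2"
    using edge_string_in_face[OF kj(2) pc_in_skel step.prems] by blast
  have "same_pt F cor (h, pc k) (g', pc j)"
    using glue_corners[OF kj] unfolding same_pt_def by blast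
  from string_ok_append[OF s1 string_ok_move_start[OF this s2]] show ?case by blast
qed

lemma Inf_le_Inf_subset_le_mult:
  fixes A E :: "real set" and c :: real
  assumes "E \<noteq> {}" "E \<subseteq> A" "\<And>a. a \<in> A \<Longrightarrow> 0 \<le> a" "c > 0"
    and "\<And>a. a \<in> A \<Longrightarrow> \<exists>e\<in>E. e \<le> c * a"
  shows "Inf A \<le> Inf E \<and> Inf E \<le> c * Inf A"
proof
  have bdd: "bdd_below A" "bdd_below E"
    using assms(2,3) by (intro bdd_belowI[of _ 0]; auto)+
  show "Inf A \<le> Inf E" by (rule cInf_superset_mono[OF assms(1) bdd(1) assms(2)])
  have "Inf E / c \<le> a" if a: "a \<in> A" for a
  proof -
    obtain e where "e \<in> E" "e \<le> c * a" using assms(5)[OF a] by blast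
    with cInf_lower[OF \<open>e \<in> E\<close> bdd(2)] have "Inf E \<le> c * a" by linarith
    then show ?thesis using \<open>c > 0\<close> by (simp add: divide_le_eq mult.commute)
  qed
  then have "Inf E / c \<le> Inf A" using assms(1,2) by (intro cInf_greatest) auto
  then show "Inf E \<le> c * Inf A" using \<open>c > 0\<close> by (simp add: divide_le_eq mult.commute)
qed

theorem theorem2p2:
  fixes F :: "'f set" and cor :: "'f \<Rightarrow> nat \<Rightarrow> 'v"
  assumes "combinatorial_tiling F cor"
    and "locally_iso_K F cor"
  shows "\<forall>f\<in>F. \<forall>g\<in>F. \<forall>z\<in>skel. \<forall>w\<in>skel.
           dist_aff F cor (f, z) (g, w) \<le> dist_edge F cor (f, z) (g, w) \<and>
           dist_edge F cor (f, z) (g, w) \<le> 3 * dist_aff F cor (f, z) (g, w)"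
proof (intro ballI)
  fix f g z w assume f: "f \<in> F" and g: "g \<in> F" and z: "z \<in> skel" and w: "w \<in> skel"
  let ?A = "{string_len ss | ss. string_ok F cor (\<lambda>_ _. True) (f, z) (g, w) ss}"
  let ?E = "{string_len ss | ss. string_ok F cor on_common_pedge (f, z) (g, w) ss}"
  have "?E \<noteq> {}" using edge_string_exists[OF assms(1) f g z w] by blast
  moreover have "?E \<subseteq> ?A" using string_ok_mono[of on_common_pedge "\<lambda>_ _. True"] by blast
  moreover have "\<exists>e\<in>?E. e \<le> 3 * a" if a: "a \<in> ?A" for a
  proof -
    obtain ss where "string_ok F cor (\<lambda>_ _. True) (f, z) (g, w) ss" "a = string_len ss"
      using a by blast
    then obtain ss' where "string_ok F cor on_common_pedge (f, z) (g, w) ss'" "string_len ss' \<le> 3 * a"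
      using edge_string_le_three_times[of F cor "(f, z)" "(g, w)" ss] z w by auto
    then show ?thesis by blast
  qed
  ultimately have "Inf ?A \<le> Inf ?E \<and> Inf ?E \<le> 3 * Inf ?A"
    by (intro Inf_le_Inf_subset_le_mult) (auto simp: string_len_nonneg)
  then show "dist_aff F cor (f, z) (g, w) \<le> dist_edge F cor (f, z) (g, w) \<and>
      dist_edge F cor (f, z) (g, w) \<le> 3 * dist_aff F cor (f, z) (g, w)"
    unfolding dist_aff_def dist_edge_def .
qed

end
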